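(* Let $L\in(0,\infty]$ and let $\gamma\in C^\infty([0,L),\mathbb{R}^2)$ be an arclength-parameterized plane curve with $\gamma(s)\neq0$ for all $s\in(0,L)$, with unit tangent $T=\gamma_s$, unit normal $N=R_{\pi/2}T$, signed curvature $\kappa$ ($\gamma_{ss}=\kappa N$) and polar tangential angle function $\omega:(0,L)\to\mathbb{R}$. Let $s\in(0,L)$ with $\kappa(s)\neq0$, and let $e(s):=\gamma(s)+\kappa(s)^{-1}N(s)$ (the center of the osculating circle). Then: (i) $\kappa(s)\omega_s(s)$ and $\gamma(s)\cdot e(s)$ have the same sign; (ii) equivalently, letting $\hat c(s)$ be the circle having the segment from $\gamma(s)$ to $e(s)$ as a diameter, $\kappa(s)\omega_s(s)>0$ iff the origin lies outside $\hat c(s)$, $\kappa(s)\omega_s(s)<0$ iff the origin lies inside $\hat c(s)$, and $\kappa(s)\omega_s(s)=0$ iff the origin lies on $\hat c(s)$; (iii) in particular, if the origin does not belong to the open disk $D(s)$ of radius $1/|\kappa(s)|$ centered at $e(s)$ (the disk enclosed by the osculating circle), then $\kappa(s)\omega_s(s)>0$.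
   Context: $R_\theta$ denotes counterclockwise rotation by angle $\theta$. With $X:=\gamma/|\gamma|$ on $(0,L)$, a polar tangential angle function is a smooth $\omega:(0,L)\to\mathbb{R}$ with $R_{\omega(s)}X(s)=T(s)$ for all $s\in(0,L)$. *)

theory Defs
  imports "HOL-Analysis.Analysis"
begin

definition smooth_on :: "real set \<Rightarrow> (real \<Rightarrow> 'a::real_normed_vector) \<Rightarrow> bool" where
  "smooth_on S f \<longleftrightarrow> (\<exists>D :: nat \<Rightarrow> real \<Rightarrow> 'a.
      (\<forall>x\<in>S. D 0 x = f x) \<and>
      (\<forall>k. \<forall>x\<in>S. (D k has_vector_derivative D (Suc k) x) (at x within S)))"

definition rot :: "real \<Rightarrow> real^2 \<Rightarrow> real^2" where
  "rot \<theta> v = vector [cos \<theta> * v$1 - sin \<theta> * v$2, sin \<theta> * v$1 + cos \<theta> * v$2]"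

end

theory Submission
  imports Defs
begin

(*
  Put \<rho> = |\<gamma>|. The polar relation T = R_\<omega>(\<gamma>/\<rho>) says \<gamma>\<cdot>T = \<rho> cos \<omega> and
  \<gamma>\<cdot>N = -\<rho> sin \<omega>, so cos \<omega> (\<gamma>\<cdot>N) + sin \<omega> (\<gamma>\<cdot>T) vanishes identically.
  Differentiating it with the Frenet equations (\<gamma>\<cdot>T)' = 1 + \<kappa> \<gamma>\<cdot>N and
  (\<gamma>\<cdot>N)' = -\<kappa> \<gamma>\<cdot>T gives \<omega>' \<rho> = \<kappa> \<rho> - sin \<omega>, hence
  \<kappa> \<omega>' \<rho>^2 = \<kappa>^2 \<rho>^2 + \<kappa> \<gamma>\<cdot>N = \<kappa>^2 (\<gamma>\<cdot>e), which is (i).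
  For (ii), the power of the origin with respect to the circle with diameter [a, b] is
  |m|^2 - r^2 = a\<cdot>b. For (iii), |e| \<ge> |e - \<gamma>| expands to 2 \<gamma>\<cdot>e \<ge> \<rho>^2 > 0.
*)

lemma rot_nth [simp]:
  "rot \<theta> v $ 1 = cos \<theta> * v $ 1 - sin \<theta> * v $ 2"
  "rot \<theta> v $ 2 = sin \<theta> * v $ 1 + cos \<theta> * v $ 2"
  by (simp_all add: rot_def)

lemma inner_real2: "(x::real^2) \<bullet> y = x $ 1 * y $ 1 + x $ 2 * y $ 2"
  by (simp add: inner_vec_def sum_2)

lemma rot_rot: "rot \<alpha> (rot \<beta> v) = rot (\<alpha> + \<beta>) v"
  by (simp add: rot_def cos_add sin_add algebra_simps)

lemma rot_pi: "rot pi v = - v"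
  by (simp add: vec_eq_iff forall_2)

lemma bounded_linear_rot: "bounded_linear (rot \<theta>)"
proof -
  have "linear (rot \<theta>)"
    by (rule linearI) (simp_all add: vec_eq_iff forall_2 algebra_simps)
  then show ?thesis
    by (simp add: linear_conv_bounded_linear)
qed

lemma rot_scaleR: "rot \<theta> (c *\<^sub>R v) = c *\<^sub>R rot \<theta> v"
  using linear_scale[OF bounded_linear.linear[OF bounded_linear_rot]] .

lemma inner_rot_self: "x \<bullet> rot \<theta> x = (x \<bullet> x) * cos \<theta>"
  by (simp add: inner_real2 algebra_simps)

lemma norm_rot [simp]: "norm (rot \<theta> x) = norm x"
proof -
  have "rot \<theta> x \<bullet> rot \<theta> x = (x \<bullet> x) * ((sin \<theta>)\<^sup>2 + (cos \<theta>)\<^sup>2)"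
    unfolding inner_real2 rot_nth power2_eq_square by algebra
  then show ?thesis
    by (simp add: norm_eq_sqrt_inner)
qed

lemma inner_rot_normalized: "x \<bullet> rot \<theta> (x /\<^sub>R norm x) = norm x * cos \<theta>"
proof -
  have "x \<bullet> rot \<theta> (x /\<^sub>R norm x) = (norm x)\<^sup>2 * cos \<theta> / norm x"
    by (simp add: rot_scaleR inner_rot_self power2_norm_eq_inner divide_inverse)
  then show ?thesis
    by (simp add: power2_eq_square)
qed

lemma inner_rot_pi_half_rot_normalized:
  "x \<bullet> rot (pi/2) (rot \<theta> (x /\<^sub>R norm x)) = - norm x * sin \<theta>"
  by (simp add: rot_rot inner_rot_normalized cos_add)

lemma has_real_derivative_inner:
  fixes f g :: "real \<Rightarrow> 'a::real_inner"
  assumes "(f has_vector_derivative f') (at x)" "(g has_vector_derivative g') (at x)"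
  shows "((\<lambda>t. f t \<bullet> g t) has_real_derivative f' \<bullet> g x + f x \<bullet> g') (at x)"
  using bounded_bilinear.has_vector_derivative[OF bounded_bilinear_inner assms]
  by (simp add: has_real_derivative_iff_has_vector_derivative add.commute)

lemma smooth_on_open_has_real_derivative:
  assumes "smooth_on U f" "open U" "x \<in> U"
  shows "(f has_real_derivative deriv f x) (at x)"
proof -
  obtain D :: "nat \<Rightarrow> real \<Rightarrow> real" where D0: "\<And>y. y \<in> U \<Longrightarrow> D 0 y = f y"
    and D: "\<And>k y. y \<in> U \<Longrightarrow> (D k has_real_derivative D (Suc k) y) (at y within U)"
    using assms(1) unfolding smooth_on_def has_real_derivative_iff_has_vector_derivative by blast
  have "(D 0 has_real_derivative D 1 x) (at x)"
    using D[OF assms(3), of 0] at_within_open[OF assms(3,2)] by simp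
  then have "(f has_real_derivative D 1 x) (at x)"
    by (rule has_field_derivative_transform_within_open[OF _ assms(2,3)]) (simp add: D0)
  then show ?thesis
    using DERIV_imp_deriv by metis
qed

lemma open_pos_ereal_interval: "open {t. 0 < t \<and> ereal t < L}"
proof -
  have "{t. 0 < t \<and> ereal t < L} = {0<..} \<inter> ereal -` {..<L}"
    by auto
  then show ?thesis
    by (simp add: open_Int open_ereal_vimage)
qed

lemma at_within_ereal_interval_eq_at:
  assumes "0 < s" "ereal s < L"
  shows "at s within {t. 0 \<le> t \<and> ereal t < L} = at s"
proof (rule at_within_interior)
  have "s \<in> {t. 0 < t \<and> ereal t < L}" "{t. 0 < t \<and> ereal t < L} \<subseteq> {t. 0 \<le> t \<and> ereal t < L}"
    using assms by auto
  then show "s \<in> interior {t. 0 \<le> t \<and> ereal t < L}"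
    using interior_maximal open_pos_ereal_interval by blast
qed

lemma polar_tangential_angle_deriv:
  fixes \<gamma> T :: "real \<Rightarrow> real^2" and \<omega> :: "real \<Rightarrow> real"
  assumes "open U" "s \<in> U"
    and \<gamma>': "(\<gamma> has_vector_derivative T s) (at s)"
    and T': "(T has_vector_derivative \<kappa> *\<^sub>R rot (pi/2) (T s)) (at s)"
    and unit: "norm (T s) = 1"
    and \<omega>': "(\<omega> has_real_derivative \<omega>') (at s)"
    and polar: "\<And>t. t \<in> U \<Longrightarrow> rot (\<omega> t) (\<gamma> t /\<^sub>R norm (\<gamma> t)) = T t"
  shows "\<omega>' * norm (\<gamma> s) = \<kappa> * norm (\<gamma> s) - sin (\<omega> s)"
proof -
  define N where "N t = rot (pi/2) (T t)" for t
  define G H where "G t = \<gamma> t \<bullet> T t" and "H t = \<gamma> t \<bullet> N t" for t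
  define P where "P t = cos (\<omega> t) * H t + sin (\<omega> t) * G t" for t
  have G_polar: "G t = norm (\<gamma> t) * cos (\<omega> t)" and H_polar: "H t = - norm (\<gamma> t) * sin (\<omega> t)"
    if "t \<in> U" for t
    using polar[OF that, symmetric]
    by (simp_all add: G_def H_def N_def inner_rot_normalized inner_rot_pi_half_rot_normalized)
  have N': "(N has_vector_derivative - \<kappa> *\<^sub>R T s) (at s)"
    using bounded_linear.has_vector_derivative[OF bounded_linear_rot T', of "pi/2"]
    by (simp add: N_def [abs_def] rot_scaleR rot_rot rot_pi)
  have G': "(G has_real_derivative 1 + \<kappa> * H s) (at s)"
    using has_real_derivative_inner[OF \<gamma>' T'] unit
    by (simp add: G_def [abs_def] H_def N_def power2_norm_eq_inner [symmetric])
  have H': "(H has_real_derivative - \<kappa> * G s) (at s)"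
    using has_real_derivative_inner[OF \<gamma>' N']
    by (simp add: H_def [abs_def] G_def N_def inner_rot_self)
  have "(P has_real_derivative
      - sin (\<omega> s) * \<omega>' * H s + - \<kappa> * G s * cos (\<omega> s)
      + (cos (\<omega> s) * \<omega>' * G s + (1 + \<kappa> * H s) * sin (\<omega> s))) (at s)"
    (is "(P has_real_derivative ?P') _")
    unfolding P_def [abs_def]
    using DERIV_add[OF DERIV_mult[OF DERIV_fun_cos[OF \<omega>'] H'] DERIV_mult[OF DERIV_fun_sin[OF \<omega>'] G']] .
  moreover have "(P has_real_derivative 0) (at s)"
    by (rule has_field_derivative_transform_within_open[OF DERIV_const \<open>open U\<close> \<open>s \<in> U\<close>])
      (simp add: P_def G_polar H_polar)
  ultimately have "?P' = 0"
    by (rule DERIV_unique)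
  moreover have "?P' = (\<omega>' - \<kappa>) * norm (\<gamma> s) * ((sin (\<omega> s))\<^sup>2 + (cos (\<omega> s))\<^sup>2) + sin (\<omega> s)"
    unfolding G_polar[OF \<open>s \<in> U\<close>] H_polar[OF \<open>s \<in> U\<close>] by algebra
  ultimately show ?thesis
    by (simp add: left_diff_distrib)
qed

lemma sgn_curvature_times_angle_deriv:
  fixes x :: "real^2"
  assumes "x \<noteq> 0" "\<kappa> \<noteq> 0" and deriv: "\<omega>' * norm x = \<kappa> * norm x - sin \<theta>"
  shows "sgn (\<kappa> * \<omega>') = sgn (x \<bullet> (x + (1 / \<kappa>) *\<^sub>R rot (pi/2) (rot \<theta> (x /\<^sub>R norm x))))"
    (is "_ = sgn ?xe")
proof -
  define \<rho> where "\<rho> = norm x"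
  have "\<rho> > 0"
    using assms(1) by (simp add: \<rho>_def)
  have inner_eq: "?xe = \<rho>\<^sup>2 - \<rho> * sin \<theta> / \<kappa>"
    by (simp add: \<rho>_def inner_add_right inner_rot_pi_half_rot_normalized power2_norm_eq_inner)
  have "\<kappa> * \<omega>' * \<rho>\<^sup>2 = \<kappa> * \<rho> * (\<omega>' * \<rho>)"
    by (simp add: power2_eq_square)
  also have "\<dots> = \<kappa> * \<rho> * (\<kappa> * \<rho> - sin \<theta>)"
    by (simp add: deriv \<rho>_def)
  also have "\<dots> = \<kappa>\<^sup>2 * ?xe"
    unfolding inner_eq using \<open>\<kappa> \<noteq> 0\<close> by (simp add: power2_eq_square field_simps)
  finally have "sgn (\<kappa> * \<omega>') * sgn (\<rho>\<^sup>2) = sgn (\<kappa>\<^sup>2) * sgn ?xe"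
    by (metis sgn_mult)
  moreover have "sgn (\<rho>\<^sup>2) = 1" "sgn (\<kappa>\<^sup>2) = 1"
    using \<open>\<rho> > 0\<close> \<open>\<kappa> \<noteq> 0\<close> by (metis sgn_pos zero_less_power2 less_irrefl)+
  ultimately show ?thesis
    by simp
qed

lemma dist_midpoint_squared_minus_radius_squared:
  fixes a b :: "'a::real_inner"
  shows "(dist 0 (midpoint a b))\<^sup>2 - (dist a b / 2)\<^sup>2 = a \<bullet> b"
  by (simp add: midpoint_def dist_norm power2_norm_eq_inner inner_add_left inner_add_right
      inner_diff_left inner_diff_right inner_commute power_divide field_simps)

lemma sgn_dist_midpoint_minus_radius:
  fixes a b :: "'a::real_inner"
  shows "sgn (dist 0 (midpoint a b) - dist a b / 2) = sgn (a \<bullet> b)"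
proof -
  define d r where "d = dist 0 (midpoint a b)" and "r = dist a b / 2"
  have nonneg: "d \<ge> 0" "r \<ge> 0"
    unfolding d_def r_def by simp_all
  have factor: "a \<bullet> b = (d - r) * (d + r)"
    using dist_midpoint_squared_minus_radius_squared[of a b]
    unfolding d_def r_def by (simp add: power2_eq_square algebra_simps)
  have "sgn (d - r) = sgn (a \<bullet> b)"
  proof (cases "d + r > 0")
    case True
    then show ?thesis
      by (simp add: factor sgn_mult)
  next
    case False
    with nonneg have "d = 0" "r = 0"
      by linarith+
    then show ?thesis
      by (simp add: factor)
  qed
  then show ?thesis
    unfolding d_def r_def .
qed

lemma inner_pos_if_origin_not_in_ball:
  fixes a c :: "'a::real_inner"
  assumes "a \<noteq> 0" "0 \<notin> ball c (dist a c)"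
  shows "a \<bullet> c > 0"
proof -
  have "(norm (c - a))\<^sup>2 \<le> (norm c)\<^sup>2"
    using assms(2) by (simp add: dist_norm norm_minus_commute)
  then have "a \<bullet> a \<le> 2 * (a \<bullet> c)"
    by (simp add: power2_norm_eq_inner inner_diff_left inner_diff_right inner_commute)
  moreover have "a \<bullet> a > 0"
    using assms(1) by simp
  ultimately show ?thesis
    by linarith
qed

lemma sgn_eq_imp_same_sign:
  fixes a b :: "'a::linordered_idom"
  assumes "sgn a = sgn b"
  shows "(0 < a \<longleftrightarrow> 0 < b) \<and> (a < 0 \<longleftrightarrow> b < 0) \<and> (a = 0 \<longleftrightarrow> b = 0)"
  using assms by (metis sgn_greater sgn_less sgn_0_0)

theorem corollary2p5:
  fixes L :: ereal and \<gamma> T N :: "real \<Rightarrow> real^2" and \<kappa> \<omega> :: "real \<Rightarrow> real" and s :: real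
  assumes L_pos: "0 < L"
    and smooth: "smooth_on {t. 0 \<le> t \<and> ereal t < L} \<gamma>"
    and T_def: "\<forall>t. 0 \<le> t \<and> ereal t < L \<longrightarrow>
                 (\<gamma> has_vector_derivative T t) (at t within {t. 0 \<le> t \<and> ereal t < L})"
    and arclength: "\<forall>t. 0 \<le> t \<and> ereal t < L \<longrightarrow> norm (T t) = 1"
    and N_def: "\<forall>t. N t = rot (pi/2) (T t)"
    and curvature: "\<forall>t. 0 \<le> t \<and> ereal t < L \<longrightarrow>
                 (T has_vector_derivative \<kappa> t *\<^sub>R N t) (at t within {t. 0 \<le> t \<and> ereal t < L})"
    and nonzero: "\<forall>t. 0 < t \<and> ereal t < L \<longrightarrow> \<gamma> t \<noteq> 0"
    and \<omega>_smooth: "smooth_on {t. 0 < t \<and> ereal t < L} \<omega>"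
    and \<omega>_polar: "\<forall>t. 0 < t \<and> ereal t < L \<longrightarrow> rot (\<omega> t) (\<gamma> t /\<^sub>R norm (\<gamma> t)) = T t"
    and s_in: "0 < s" "ereal s < L"
    and \<kappa>_nz: "\<kappa> s \<noteq> 0"
  shows "(let e = \<gamma> s + (1 / \<kappa> s) *\<^sub>R N s;
              m = (1/2) *\<^sub>R (\<gamma> s + e);
              r = dist (\<gamma> s) e / 2;
              k\<omega> = \<kappa> s * deriv \<omega> s
          in sgn k\<omega> = sgn (\<gamma> s \<bullet> e)
           \<and> (k\<omega> > 0 \<longleftrightarrow> dist 0 m > r)
           \<and> (k\<omega> < 0 \<longleftrightarrow> dist 0 m < r)
           \<and> (k\<omega> = 0 \<longleftrightarrow> dist 0 m = r)
           \<and> (0 \<notin> ball e (1 / \<bar>\<kappa> s\<bar>) \<longrightarrow> k\<omega> > 0))"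
proof -
  define U where "U = {t. 0 < t \<and> ereal t < L}"
  have U: "open U" "s \<in> U"
    using open_pos_ereal_interval s_in by (simp_all add: U_def)
  have at_s: "at s within {t. 0 \<le> t \<and> ereal t < L} = at s"
    using at_within_ereal_interval_eq_at[OF s_in] .
  have \<gamma>': "(\<gamma> has_vector_derivative T s) (at s)"
    using T_def[rule_format, of s] s_in by (simp add: at_s)
  have T': "(T has_vector_derivative \<kappa> s *\<^sub>R rot (pi/2) (T s)) (at s)"
    using curvature[rule_format, of s] N_def s_in by (simp add: at_s)
  have unit: "norm (T s) = 1"
    using arclength s_in by simp
  have \<omega>': "(\<omega> has_real_derivative deriv \<omega> s) (at s)"
    using smooth_on_open_has_real_derivative[OF \<omega>_smooth[folded U_def] U] .
  have polar: "\<And>t. t \<in> U \<Longrightarrow> rot (\<omega> t) (\<gamma> t /\<^sub>R norm (\<gamma> t)) = T t"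
    using \<omega>_polar by (simp add: U_def)
  define e where "e = \<gamma> s + (1 / \<kappa> s) *\<^sub>R N s"
  have sgn_k\<omega>: "sgn (\<kappa> s * deriv \<omega> s) = sgn (\<gamma> s \<bullet> e)"
    using sgn_curvature_times_angle_deriv[OF _ \<kappa>_nz polar_tangential_angle_deriv[OF U \<gamma>' T' unit \<omega>' polar]]
      nonzero s_in polar[OF U(2)]
    by (simp add: e_def N_def)
  have circle: "sgn (dist 0 (midpoint (\<gamma> s) e) - dist (\<gamma> s) e / 2) = sgn (\<gamma> s \<bullet> e)"
    by (rule sgn_dist_midpoint_minus_radius)
  have "dist (\<gamma> s) e = 1 / \<bar>\<kappa> s\<bar>"
    using unit by (simp add: e_def N_def dist_norm)
  then have outside: "\<gamma> s \<bullet> e > 0" if "0 \<notin> ball e (1 / \<bar>\<kappa> s\<bar>)"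
    using inner_pos_if_origin_not_in_ball[of "\<gamma> s" e] nonzero s_in that by simp
  have "(1/2) *\<^sub>R (\<gamma> s + e) = midpoint (\<gamma> s) e"
    by (simp add: midpoint_def)
  with sgn_eq_imp_same_sign[OF sgn_k\<omega>] sgn_eq_imp_same_sign[OF circle] outside sgn_k\<omega>
  show ?thesis
    unfolding Let_def e_def [symmetric] by auto
qed

end
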